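(* Let $G=K_4$ and $\vec G=(V,E^+\cup E^-)$ as in the context. The all-ones vector $\mathbf 1\in\mathbb{Z}^{E^+\cup E^-}$ satisfies $\mathbf 1(\delta^+_{\vec G}(U))\ge3$ for all $\emptyset\neq U\subsetneq V$ (so it is a nowhere-zero $3$-SCD), but the arc set $E^+\cup E^-$ cannot be partitioned into $3$ strongly connected digraphs, i.e. there are no pairwise disjoint $F_1,F_2,F_3$ with $F_1\cup F_2\cup F_3=E^+\cup E^-$ and $\delta^+_{\vec G}(U)\cap F_i\neq\emptyset$ for all $i$ and all $\emptyset\neq U\subsetneq V$.
   Context: $K_4$ is the complete graph on 4 vertices. $\vec G=(V,E^+\cup E^-)$ is obtained from $G$ by replacing each edge $\{u,v\}$ by the two arcs $(u,v)$ and $(v,u)$; $\delta^+_{\vec G}(U)$ is the set of arcs leaving $U$, and $x(B)=\sum_{e\in B}x_e$. *)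

theory Defs
  imports Main
begin

text \<open>The complete graph K_4 on vertex set V = {0,1,2,3}; its bidirected digraph
  has arc set E^+ \<union> E^- = all ordered pairs (u,v) of distinct vertices.\<close>

definition K4_V :: "nat set" where
  "K4_V = {0, 1, 2, 3}"

definition K4_arcs :: "(nat \<times> nat) set" where
  "K4_arcs = {(u, v). u \<in> K4_V \<and> v \<in> K4_V \<and> u \<noteq> v}"

definition delta_out :: "nat set \<Rightarrow> (nat \<times> nat) set" where
  "delta_out U = {(u, v) \<in> K4_arcs. u \<in> U \<and> v \<notin> U}"

definition xsum :: "(nat \<times> nat \<Rightarrow> int) \<Rightarrow> (nat \<times> nat) set \<Rightarrow> int" where
  "xsum x B = (\<Sum>e\<in>B. x e)"

definition all_ones :: "nat \<times> nat \<Rightarrow> int" where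
  "all_ones e = 1"

end

theory Submission
  imports Defs
begin

text \<open>Every cut U \<times> (V - U) of K4 has |U| (4 - |U|) \<ge> 3 arcs. For the second part,
  a set of arcs meeting every cut is strongly connected and spanning. Three disjoint such sets
  must each contain exactly one of the three arcs leaving any vertex, so each is the graph of a
  successor map with no invariant proper subset, i.e. of a cyclic permutation
  v0 \<rightarrow> v1 \<rightarrow> v2 \<rightarrow> v3 \<rightarrow> v0.
  One of the other two maps sends v0 to v2; following its own cycle it must go on to v1,
  then v3, and then back to v0, where it collides with the first map.\<close>

lemma delta_out_eq: "U \<subseteq> K4_V \<Longrightarrow> delta_out U = U \<times> (K4_V - U)"
  unfolding delta_out_def K4_arcs_def by auto

lemma card_delta_out:
  assumes "U \<subseteq> K4_V"
  shows "card (delta_out U) = card U * (4 - card U)"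
proof -
  have "finite U" using assms finite_subset by (auto simp: K4_V_def)
  then have "card (K4_V - U) = 4 - card U"
    using assms by (simp add: card_Diff_subset K4_V_def)
  then show ?thesis
    using assms by (simp add: delta_out_eq card_cartesian_product)
qed

lemma all_ones_cut_ge_3:
  assumes "U \<noteq> {}" "U \<subset> K4_V"
  shows "xsum all_ones (delta_out U) \<ge> 3"
proof -
  have "finite U" using assms(2) finite_subset by (auto simp: K4_V_def)
  then have "card U \<ge> 1" using assms(1) by (simp add: Suc_le_eq card_gt_0_iff)
  moreover have "card U < 4"
    using psubset_card_mono[OF _ assms(2)] by (simp add: K4_V_def)
  ultimately have "card U \<in> {1, 2, 3}" by auto
  then show ?thesis
    using assms(2) by (auto simp: xsum_def all_ones_def card_delta_out)
qed

definition irreducible_map_on :: "'a set \<Rightarrow> ('a \<Rightarrow> 'a) \<Rightarrow> bool" where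
  "irreducible_map_on V f \<longleftrightarrow> f ` V \<subseteq> V \<and> (\<forall>U. U \<noteq> {} \<and> U \<subset> V \<longrightarrow> \<not> f ` U \<subseteq> U)"

lemma irreducible_map_on_invariant:
  "irreducible_map_on V f \<Longrightarrow> U \<noteq> {} \<Longrightarrow> U \<subseteq> V \<Longrightarrow> f ` U \<subseteq> U \<Longrightarrow> U = V"
  unfolding irreducible_map_on_def by blast

lemma irreducible_map_on_four_cycle:
  fixes f :: "'a \<Rightarrow> 'a"
  assumes irr: "irreducible_map_on V f" and "card V = 4" and "v \<in> V"
  shows "V = {v, f v, f (f v), f (f (f v))}" and "distinct [v, f v, f (f v), f (f (f v))]"
    and "f (f (f (f v))) = v"
proof -
  define v1 v2 v3 where "v1 = f v" and "v2 = f v1" and "v3 = f v2"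
  have "f ` V \<subseteq> V" using irr by (simp add: irreducible_map_on_def)
  then have in_V: "v1 \<in> V" "v2 \<in> V" "v3 \<in> V" "f v3 \<in> V"
    using \<open>v \<in> V\<close> by (auto simp: v1_def v2_def v3_def)
  have small: "U \<noteq> V" if "card U < 4" for U :: "'a set"
    using that \<open>card V = 4\<close> by auto
  have "v1 \<noteq> v"
    using small[of "{v}"] irreducible_map_on_invariant[OF irr, of "{v}"] \<open>v \<in> V\<close>
    by (auto simp: v1_def)
  moreover have "v2 \<notin> {v, v1}"
  proof
    assume "v2 \<in> {v, v1}"
    then have "{v, v1} = V"
      using irreducible_map_on_invariant[OF irr, of "{v, v1}"] \<open>v \<in> V\<close> in_V
      by (auto simp: v1_def v2_def)
    then show False using small[of "{v, v1}"] by (auto simp: card_insert_if)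
  qed
  moreover have "v3 \<notin> {v, v1, v2}"
  proof
    assume "v3 \<in> {v, v1, v2}"
    then have "{v, v1, v2} = V"
      using irreducible_map_on_invariant[OF irr, of "{v, v1, v2}"] \<open>v \<in> V\<close> in_V
      by (auto simp: v1_def v2_def v3_def)
    then show False using small[of "{v, v1, v2}"] by (auto simp: card_insert_if)
  qed
  ultimately have dist: "distinct [v, v1, v2, v3]" by auto
  then show "distinct [v, f v, f (f v), f (f (f v))]" by (simp add: v1_def v2_def v3_def)
  have "finite V" using \<open>card V = 4\<close> card.infinite by fastforce
  moreover have "{v, v1, v2, v3} \<subseteq> V" using \<open>v \<in> V\<close> in_V by simp
  moreover have "card {v, v1, v2, v3} = card V" using dist \<open>card V = 4\<close> by simp
  ultimately have V_eq: "V = {v, v1, v2, v3}" by (metis card_subset_eq)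
  then show "V = {v, f v, f (f v), f (f (f v))}" by (simp add: v1_def v2_def v3_def)
  have "f v3 = v"
  proof (rule ccontr)
    assume "f v3 \<noteq> v"
    then have "f v3 \<in> {v1, v2, v3}" using in_V V_eq by auto
    then have "{v1, v2, v3} = V"
      using irreducible_map_on_invariant[OF irr, of "{v1, v2, v3}"] in_V
      by (auto simp: v2_def v3_def)
    then show False using dist V_eq by auto
  qed
  then show "f (f (f (f v))) = v" by (simp add: v1_def v2_def v3_def)
qed

lemma irreducible_map_on_no_shortcut:
  assumes f: "irreducible_map_on V f" and g: "irreducible_map_on V g"
    and "card V = 4" and "v \<in> V"
    and disagree: "\<forall>u\<in>V. f u \<noteq> g u" and shortcut: "g v = f (f v)"
  shows False
proof -
  define v1 v2 v3 where "v1 = f v" and "v2 = f v1" and "v3 = f v2"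
  have V: "V = {v, v1, v2, v3}" and dist: "distinct [v, v1, v2, v3]" and "f v3 = v"
    using irreducible_map_on_four_cycle[OF f \<open>card V = 4\<close> \<open>v \<in> V\<close>]
    by (simp_all add: v1_def v2_def v3_def)
  have "V = {v, g v, g (g v), g (g (g v))}" and g_dist: "distinct [v, g v, g (g v), g (g (g v))]"
    and g_back: "g (g (g (g v))) = v"
    using irreducible_map_on_four_cycle[OF g \<open>card V = 4\<close> \<open>v \<in> V\<close>] by simp_all
  then have g_in: "g (g v) \<in> V" "g (g (g v)) \<in> V" by auto
  have "g v = v2" using shortcut by (simp add: v1_def v2_def)
  have "g v2 \<noteq> f v2" using disagree V by auto
  then have "g v2 = v1"
    using g_in(1) g_dist \<open>g v = v2\<close> V by (auto simp: v3_def)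
  then have "g v1 = v3"
    using g_in(2) g_dist \<open>g v = v2\<close> V by auto
  then have "g v3 = f v3"
    using g_back \<open>g v = v2\<close> \<open>g v2 = v1\<close> \<open>f v3 = v\<close> by simp
  then show False using disagree V by simp
qed

lemma no_three_disagreeing_irreducible_maps:
  assumes "card V = 4"
    and f: "irreducible_map_on V f" and g: "irreducible_map_on V g" and h: "irreducible_map_on V h"
    and disagree: "\<forall>v\<in>V. f v \<noteq> g v \<and> f v \<noteq> h v \<and> g v \<noteq> h v"
  shows False
proof -
  obtain v where "v \<in> V" using \<open>card V = 4\<close> by fastforce
  note f_cycle = irreducible_map_on_four_cycle[OF f \<open>card V = 4\<close> \<open>v \<in> V\<close>]
  have "g v \<in> V" "h v \<in> V"
    using g h \<open>v \<in> V\<close> by (auto simp: irreducible_map_on_def)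
  moreover have "g v \<noteq> v" "h v \<noteq> v"
    using irreducible_map_on_four_cycle(2)[OF g \<open>card V = 4\<close> \<open>v \<in> V\<close>]
      irreducible_map_on_four_cycle(2)[OF h \<open>card V = 4\<close> \<open>v \<in> V\<close>] by auto
  ultimately have "g v = f (f v) \<or> h v = f (f v)"
    using f_cycle disagree \<open>v \<in> V\<close> by auto
  moreover have "\<forall>u\<in>V. f u \<noteq> g u" "\<forall>u\<in>V. f u \<noteq> h u" using disagree by auto
  ultimately show False
    using irreducible_map_on_no_shortcut[OF f g \<open>card V = 4\<close> \<open>v \<in> V\<close>]
      irreducible_map_on_no_shortcut[OF f h \<open>card V = 4\<close> \<open>v \<in> V\<close>] by blast
qed

definition covers_all_cuts :: "(nat \<times> nat) set \<Rightarrow> bool" where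
  "covers_all_cuts F \<longleftrightarrow> (\<forall>U. U \<noteq> {} \<and> U \<subset> K4_V \<longrightarrow> delta_out U \<inter> F \<noteq> {})"

lemma singleton_psubset_K4_V: "v \<in> K4_V \<Longrightarrow> {v} \<subset> K4_V"
  by (auto simp: K4_V_def)

lemma unique_out_arc:
  assumes "F \<inter> G = {}" "F \<inter> H = {}" "G \<inter> H = {}" "F \<subseteq> K4_arcs"
    and "covers_all_cuts F" "covers_all_cuts G" "covers_all_cuts H" and "v \<in> K4_V"
  shows "\<exists>!w. (v, w) \<in> F"
proof -
  let ?D = "delta_out {v}"
  have cut: "?D \<inter> X \<noteq> {}" if "covers_all_cuts X" for X
    using that singleton_psubset_K4_V[OF \<open>v \<in> K4_V\<close>] by (simp add: covers_all_cuts_def)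
  have D: "?D = {v} \<times> (K4_V - {v})" using \<open>v \<in> K4_V\<close> by (simp add: delta_out_eq)
  have "card ?D = 3" using \<open>v \<in> K4_V\<close> by (simp add: card_delta_out)
  obtain w where "(v, w) \<in> F" using cut[OF \<open>covers_all_cuts F\<close>] D by auto
  moreover have "w' = w" if "(v, w') \<in> F" for w'
  proof (rule ccontr)
    assume "w' \<noteq> w"
    obtain g h where "g \<in> ?D \<inter> G" "h \<in> ?D \<inter> H"
      using cut \<open>covers_all_cuts G\<close> \<open>covers_all_cuts H\<close> by blast
    moreover have "(v, w) \<in> ?D" "(v, w') \<in> ?D"
      using \<open>(v, w) \<in> F\<close> \<open>(v, w') \<in> F\<close> \<open>F \<subseteq> K4_arcs\<close> by (auto simp: delta_out_def K4_arcs_def)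
    moreover have "g \<notin> F" "h \<notin> F" "g \<noteq> h"
      using \<open>g \<in> ?D \<inter> G\<close> \<open>h \<in> ?D \<inter> H\<close> assms(1-3) by blast+
    ultimately have sub: "{(v, w), (v, w'), g, h} \<subseteq> ?D"
      and four: "card {(v, w), (v, w'), g, h} = 4"
      using \<open>w' \<noteq> w\<close> \<open>(v, w) \<in> F\<close> \<open>(v, w') \<in> F\<close> by (auto simp: card_insert_if)
    have "finite ?D" using \<open>card ?D = 3\<close> card.infinite by force
    from card_mono[OF this sub] show False using four \<open>card ?D = 3\<close> by simp
  qed
  ultimately show ?thesis by blast
qed

lemma irreducible_successor_map:
  assumes "F \<subseteq> K4_arcs" "covers_all_cuts F"
    and succ: "\<And>v w. v \<in> K4_V \<Longrightarrow> (v, w) \<in> F \<longleftrightarrow> w = f v"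
  shows "irreducible_map_on K4_V f"
  unfolding irreducible_map_on_def
proof (intro conjI allI impI)
  have "(v, f v) \<in> F" if "v \<in> K4_V" for v using succ[OF that] by blast
  then show "f ` K4_V \<subseteq> K4_V" using \<open>F \<subseteq> K4_arcs\<close> by (auto simp: K4_arcs_def)
next
  fix U assume U: "U \<noteq> {} \<and> U \<subset> K4_V"
  then have "delta_out U \<inter> F \<noteq> {}"
    using \<open>covers_all_cuts F\<close> by (simp add: covers_all_cuts_def)
  then obtain u w where "u \<in> U" "w \<notin> U" "(u, w) \<in> F" by (auto simp: delta_out_def)
  moreover have "w = f u" using succ \<open>u \<in> U\<close> U \<open>(u, w) \<in> F\<close> by blast
  ultimately show "\<not> f ` U \<subseteq> U" by blast
qed

lemma successor_map_of_disjoint_cut_covers: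
  assumes "F \<inter> G = {}" "F \<inter> H = {}" "G \<inter> H = {}" "F \<subseteq> K4_arcs"
    and "covers_all_cuts F" "covers_all_cuts G" "covers_all_cuts H"
  obtains f where "irreducible_map_on K4_V f" and "\<And>v. v \<in> K4_V \<Longrightarrow> (v, f v) \<in> F"
proof -
  define f where "f v = (THE w. (v, w) \<in> F)" for v
  have succ: "(v, w) \<in> F \<longleftrightarrow> w = f v" if "v \<in> K4_V" for v w
    using theI'[OF unique_out_arc[OF assms that]] unique_out_arc[OF assms that]
    unfolding f_def by blast
  show ?thesis
    using that irreducible_successor_map[OF \<open>F \<subseteq> K4_arcs\<close> \<open>covers_all_cuts F\<close> succ] succ
    by blast
qed

theorem mainTheorem16:
  shows "(\<forall>U. U \<noteq> {} \<and> U \<subset> K4_V \<longrightarrow> xsum all_ones (delta_out U) \<ge> 3)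
    \<and> \<not> (\<exists>F1 F2 F3. F1 \<inter> F2 = {} \<and> F1 \<inter> F3 = {} \<and> F2 \<inter> F3 = {}
          \<and> F1 \<union> F2 \<union> F3 = K4_arcs
          \<and> (\<forall>U. U \<noteq> {} \<and> U \<subset> K4_V \<longrightarrow>
                 delta_out U \<inter> F1 \<noteq> {} \<and> delta_out U \<inter> F2 \<noteq> {} \<and> delta_out U \<inter> F3 \<noteq> {}))"
proof (intro conjI notI allI impI)
  show "xsum all_ones (delta_out U) \<ge> 3" if "U \<noteq> {} \<and> U \<subset> K4_V" for U
    using that all_ones_cut_ge_3 by blast
next
  assume "\<exists>F1 F2 F3. F1 \<inter> F2 = {} \<and> F1 \<inter> F3 = {} \<and> F2 \<inter> F3 = {}
          \<and> F1 \<union> F2 \<union> F3 = K4_arcs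
          \<and> (\<forall>U. U \<noteq> {} \<and> U \<subset> K4_V \<longrightarrow>
                 delta_out U \<inter> F1 \<noteq> {} \<and> delta_out U \<inter> F2 \<noteq> {} \<and> delta_out U \<inter> F3 \<noteq> {})"
  then obtain F1 F2 F3 where disj: "F1 \<inter> F2 = {}" "F1 \<inter> F3 = {}" "F2 \<inter> F3 = {}"
    and arcs: "F1 \<union> F2 \<union> F3 = K4_arcs"
    and covers: "covers_all_cuts F1" "covers_all_cuts F2" "covers_all_cuts F3"
    by (auto simp: covers_all_cuts_def)
  obtain f1 where f1: "irreducible_map_on K4_V f1" "\<And>v. v \<in> K4_V \<Longrightarrow> (v, f1 v) \<in> F1"
    using successor_map_of_disjoint_cut_covers[of F1 F2 F3] disj arcs covers by blast
  obtain f2 where f2: "irreducible_map_on K4_V f2" "\<And>v. v \<in> K4_V \<Longrightarrow> (v, f2 v) \<in> F2"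
    using successor_map_of_disjoint_cut_covers[of F2 F1 F3] disj arcs covers by blast
  obtain f3 where f3: "irreducible_map_on K4_V f3" "\<And>v. v \<in> K4_V \<Longrightarrow> (v, f3 v) \<in> F3"
    using successor_map_of_disjoint_cut_covers[of F3 F1 F2] disj arcs covers by blast
  have "\<forall>v\<in>K4_V. f1 v \<noteq> f2 v \<and> f1 v \<noteq> f3 v \<and> f2 v \<noteq> f3 v"
    using f1(2) f2(2) f3(2) disj by fastforce
  moreover have "card K4_V = 4" by (simp add: K4_V_def)
  ultimately show False
    using no_three_disagreeing_irreducible_maps f1(1) f2(1) f3(1) by blast
qed

end
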